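(* Let $d\ge1$, let $\mathbb{S}_d$ be the unit sphere of $\mathbb{C}^d$ and $\mathbb{T}$ the unit circle. The weak-$*$ exposed points of the closed unit ball of the dual space $\mathrm{A}(\mathbb{B}_d)^*$ of the ball algebra are exactly the functionals $\lambda\delta_\zeta$, $f\mapsto \lambda f(\zeta)$, for $\zeta\in\mathbb{S}_d$ and $\lambda\in\mathbb{T}$.
   Context: $\mathrm{A}(\mathbb{B}_d)$ is the Banach algebra (supremum norm) of functions analytic on the open unit ball $\mathbb{B}_d\subset\mathbb{C}^d$ and continuous on its closure. For a weak-$*$ closed convex set $C$ in a dual Banach space $E^*$, a point $x_0\in C$ is a weak-$*$ exposed point if there is a weak-$*$ continuous functional (i.e. an element $e\in E$) with $\operatorname{Re} x(e) < \operatorname{Re} x_0(e)$ for all $x\in C\setminus\{x_0\}$. *)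

theory Defs
  imports "HOL-Analysis.Analysis"
begin

text \<open>Points of C^d are vectors of type complex^'n (with 'n a finite type,
  d = CARD('n) \<ge> 1).\<close>

definition holo_several :: "('n::finite) itself \<Rightarrow> (complex^'n \<Rightarrow> complex) \<Rightarrow> (complex^'n) set \<Rightarrow> bool" where
  "holo_several _ f S \<longleftrightarrow>
     (\<forall>z\<in>S. \<exists>L. (f has_derivative L) (at z) \<and> (\<forall>c w. L (c *s w) = c * L w))"

definition ball_algebra :: "(complex^('n::finite) \<Rightarrow> complex) set" where
  "ball_algebra = {f. continuous_on (cball 0 1) f \<and> holo_several TYPE('n) f (ball 0 1)}"

definition sup_norm :: "(complex^('n::finite) \<Rightarrow> complex) \<Rightarrow> real" where
  "sup_norm f = (SUP z\<in>cball 0 1. norm (f z))"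

text \<open>Closed unit ball of the dual A(B_d)^*: bounded complex-linear functionals of
  norm \<le> 1, represented extensionally (value 0 outside A(B_d)).\<close>
definition dual_unit_ball :: "((complex^('n::finite) \<Rightarrow> complex) \<Rightarrow> complex) set" where
  "dual_unit_ball = {\<phi>.
     (\<forall>f\<in>ball_algebra. \<forall>g\<in>ball_algebra. \<phi> (\<lambda>z. f z + g z) = \<phi> f + \<phi> g) \<and>
     (\<forall>c. \<forall>f\<in>ball_algebra. \<phi> (\<lambda>z. c * f z) = c * \<phi> f) \<and>
     (\<forall>f\<in>ball_algebra. norm (\<phi> f) \<le> sup_norm f) \<and>
     (\<forall>f. f \<notin> ball_algebra \<longrightarrow> \<phi> f = 0)}"

text \<open>Weak-* exposed points of a set C of functionals on A(B_d): exposed by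
  evaluation at some element e of the predual A(B_d).\<close>
definition weak_star_exposed ::
  "((complex^('n::finite) \<Rightarrow> complex) \<Rightarrow> complex) set \<Rightarrow> ((complex^'n \<Rightarrow> complex) \<Rightarrow> complex) \<Rightarrow> bool" where
  "weak_star_exposed C x0 \<longleftrightarrow> x0 \<in> C \<and>
     (\<exists>e\<in>ball_algebra. \<forall>x\<in>C - {x0}. Re (x e) < Re (x0 e))"

definition scaled_eval :: "complex \<Rightarrow> complex^('n::finite) \<Rightarrow> (complex^'n \<Rightarrow> complex) \<Rightarrow> complex" where
  "scaled_eval l \<zeta> = (\<lambda>f. if f \<in> ball_algebra then l * f \<zeta> else 0)"

end

theory Submission
  imports Defs "HOL-Complex_Analysis.Conformal_Mappings"
begin

text \<open>The peak function \<open>p\<^sub>\<zeta>(z) = (1 + \<langle>z, \<zeta>\<rangle>)/2\<close> of a point \<open>\<zeta>\<close> of the sphere satisfies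
  \<open>|p\<^sub>\<zeta>(z)| \<le> 1 - |z - \<zeta>|\<^sup>2/8\<close> on the closed ball. So if \<open>u\<close> vanishes at \<open>\<zeta>\<close>, then
  \<open>\<parallel>p\<^sub>\<zeta> + s u\<parallel> \<le> 1 + o(s)\<close> as \<open>s \<down> 0\<close>, and a functional \<open>x\<close> of norm at most 1 with
  \<open>x(p\<^sub>\<zeta>) = 1\<close> satisfies \<open>Re x(u) \<le> 0\<close>; applied to \<open>\<plusminus>u, \<plusminus>i u\<close> this gives \<open>x = \<delta>\<^sub>\<zeta>\<close>.
  Hence \<open>\<lambda>\<delta>\<^sub>\<zeta>\<close> is the only point of the dual ball where \<open>Re x(\<lambda>\<^sup>-\<^sup>1 p\<^sub>\<zeta>)\<close> reaches 1.

  Conversely, if \<open>e\<close> exposes \<open>x\<^sub>0\<close>, every \<open>\<lambda>\<delta>\<^sub>\<zeta>\<close> with \<open>|\<lambda>| = 1\<close> and \<open>\<lambda> e(\<zeta>) = \<parallel>e\<parallel>\<close> attains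
  the maximum of \<open>Re x(e)\<close> over the dual ball and therefore equals \<open>x\<^sub>0\<close>. Such \<open>\<zeta>\<close> exist, and
  none is interior: otherwise the maximum modulus principle on complex lines would make \<open>e\<close>
  constant on the open ball, producing two different such evaluations.\<close>

lemma norm_vector_smult_complex: "norm (c *s v) = norm c * norm (v :: complex^'n::finite)"
  by (simp add: norm_vec_def norm_mult L2_set_right_distrib)

lemma bounded_linear_vector_smult_left: "bounded_linear (\<lambda>c::complex. c *s (v :: complex^'n::finite))"
  by (rule bounded_linear_intro[where K = "norm v"])
     (auto simp: vec_eq_iff algebra_simps norm_vector_smult_complex)

definition cinner :: "complex^('n::finite) \<Rightarrow> complex^'n \<Rightarrow> complex" where
  "cinner z w = (\<Sum>i\<in>UNIV. z $ i * cnj (w $ i))"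

lemma norm_vec_square: "(norm (z :: complex^'n::finite))^2 = (\<Sum>i\<in>UNIV. (norm (z $ i))^2)"
  by (simp add: norm_vec_def L2_set_def sum_nonneg)

lemma cinner_self: "cinner z z = of_real ((norm z)^2)"
  unfolding cinner_def norm_vec_square of_real_sum
  by (rule sum.cong) (rule refl, rule complex_norm_square[symmetric])

lemma norm_cinner_le: "norm (cinner z w) \<le> norm z * norm w"
proof -
  have "norm (cinner z w) \<le> (\<Sum>i\<in>UNIV. \<bar>norm (z $ i)\<bar> * \<bar>norm (w $ i)\<bar>)"
    unfolding cinner_def by (rule order_trans[OF norm_sum]) (simp add: norm_mult)
  also have "\<dots> \<le> L2_set (\<lambda>i. norm (z $ i)) UNIV * L2_set (\<lambda>i. norm (w $ i)) UNIV"
    by (rule L2_set_mult_ineq)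
  finally show ?thesis by (simp add: norm_vec_def)
qed

lemma norm_diff_square_cinner:
  "(norm (z - w))^2 = (norm z)^2 - 2 * Re (cinner z w) + (norm w)^2"
proof -
  have "(norm (z $ i - w $ i))^2 = (norm (z $ i))^2 - 2 * Re (z $ i * cnj (w $ i)) + (norm (w $ i))^2" for i
    unfolding cmod_power2 by (simp add: power2_eq_square algebra_simps)
  then show ?thesis
    by (simp add: norm_vec_square cinner_def Re_sum sum.distrib sum_subtractf sum_distrib_left)
qed

lemma bounded_linear_cinner_left: "bounded_linear (\<lambda>z. cinner z w)"
  unfolding cinner_def
  by (intro bounded_linear_sum bounded_linear_compose[OF bounded_linear_mult_left] bounded_linear_vec_nth)

lemma cinner_smult_left: "cinner (c *s z) w = c * cinner z w"
  by (simp add: cinner_def sum_distrib_left mult.assoc)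

lemma holo_several_add:
  assumes "holo_several TYPE('n::finite) f S" "holo_several TYPE('n) g S"
  shows "holo_several TYPE('n) (\<lambda>z. f z + g z) S"
  unfolding holo_several_def
proof
  fix z assume "z \<in> S"
  with assms obtain L M where
    L: "(f has_derivative L) (at z)" "\<forall>c w. L (c *s w) = c * L w" and
    M: "(g has_derivative M) (at z)" "\<forall>c w. M (c *s w) = c * M w"
    unfolding holo_several_def by blast
  show "\<exists>L. ((\<lambda>z. f z + g z) has_derivative L) (at z) \<and> (\<forall>c w. L (c *s w) = c * L w)"
    using L M by (intro exI[of _ "\<lambda>h. L h + M h"]) (auto intro: has_derivative_add simp: algebra_simps)
qed

lemma holo_several_cmult:
  assumes "holo_several TYPE('n::finite) f S"
  shows "holo_several TYPE('n) (\<lambda>z. a * f z) S"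
  unfolding holo_several_def
proof
  fix z assume "z \<in> S"
  with assms obtain L where L: "(f has_derivative L) (at z)" "\<forall>c w. L (c *s w) = c * L w"
    unfolding holo_several_def by blast
  show "\<exists>L. ((\<lambda>z. a * f z) has_derivative L) (at z) \<and> (\<forall>c w. L (c *s w) = c * L w)"
    using L by (intro exI[of _ "\<lambda>h. a * L h"]) (auto intro: has_derivative_mult_right)
qed

lemma holo_several_affine:
  assumes "bounded_linear L" "\<And>c w. L (c *s w) = c * L w"
  shows "holo_several TYPE('n::finite) (\<lambda>z. a + L z) S"
  unfolding holo_several_def
  using assms has_derivative_add[OF has_derivative_const bounded_linear_imp_has_derivative[OF assms(1)]]
  by (intro ballI exI[of _ L]) auto

lemma ball_algebra_add: "f \<in> ball_algebra \<Longrightarrow> g \<in> ball_algebra \<Longrightarrow> (\<lambda>z. f z + g z) \<in> ball_algebra"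
  unfolding ball_algebra_def by (auto intro: holo_several_add continuous_on_add)

lemma ball_algebra_cmult: "f \<in> ball_algebra \<Longrightarrow> (\<lambda>z. a * f z) \<in> ball_algebra"
  unfolding ball_algebra_def by (auto intro: holo_several_cmult continuous_on_mult_left)

lemma ball_algebra_affine:
  assumes "bounded_linear L" "\<And>c w. L (c *s w) = c * L w"
  shows "(\<lambda>z. a + L z) \<in> ball_algebra"
  unfolding ball_algebra_def
  using assms continuous_on_add[OF continuous_on_const linear_continuous_on[OF assms(1)]]
  by (auto intro: holo_several_affine)

lemma ball_algebra_const: "(\<lambda>z. a) \<in> ball_algebra"
  using ball_algebra_affine[of "\<lambda>z. 0" a] by simp

lemma ball_algebra_coord: "(\<lambda>z. z $ i) \<in> ball_algebra"
  using ball_algebra_affine[OF bounded_linear_vec_nth, of i 0] by simp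

lemma sup_norm_ge:
  assumes "f \<in> ball_algebra" "z \<in> cball 0 1"
  shows "norm (f z) \<le> sup_norm f"
proof -
  have "bounded ((\<lambda>z. norm (f z)) ` cball 0 1)"
    using assms(1) unfolding ball_algebra_def
    by (intro compact_imp_bounded compact_continuous_image continuous_on_norm) auto
  then show ?thesis
    unfolding sup_norm_def by (rule cSUP_upper[OF assms(2) bounded_imp_bdd_above])
qed

lemma sup_norm_le: "(\<And>z. z \<in> cball (0::complex^'n::finite) 1 \<Longrightarrow> norm (f z) \<le> B) \<Longrightarrow> sup_norm f \<le> B"
  unfolding sup_norm_def by (rule cSUP_least) auto

lemma holomorphic_on_complex_line:
  assumes "holo_several TYPE('n::finite) f S"
  shows "(\<lambda>t. f (z0 + t *s v)) holomorphic_on {t. z0 + t *s v \<in> S}"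
  unfolding holomorphic_on_def
proof (intro ballI, rule field_differentiable_at_within)
  fix t assume "t \<in> {t. z0 + t *s v \<in> S}"
  then obtain L where L: "(f has_derivative L) (at (z0 + t *s v))" "\<forall>c w. L (c *s w) = c * L w"
    using assms unfolding holo_several_def by blast
  have "((\<lambda>t. z0 + t *s v) has_derivative (\<lambda>t. t *s v)) (at t)"
    using has_derivative_add[OF has_derivative_const
        bounded_linear_imp_has_derivative[OF bounded_linear_vector_smult_left]] by simp
  then have "(f \<circ> (\<lambda>t. z0 + t *s v) has_derivative L \<circ> (\<lambda>t. t *s v)) (at t)"
    using L(1) by (rule diff_chain_at)
  moreover have "L \<circ> (\<lambda>t. t *s v) = (*) (L v)"
    using L(2) by (auto simp: fun_eq_iff mult.commute)
  ultimately have "((\<lambda>t. f (z0 + t *s v)) has_field_derivative L v) (at t)"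
    unfolding has_field_derivative_def by (simp add: comp_def)
  then show "(\<lambda>t. f (z0 + t *s v)) field_differentiable at t"
    unfolding field_differentiable_def by blast
qed

lemma holo_several_maximum_modulus:
  assumes holo: "holo_several TYPE('n::finite) f (ball 0 1)"
    and \<zeta>: "\<zeta> \<in> ball 0 1" and max: "\<And>w. w \<in> ball 0 1 \<Longrightarrow> norm (f w) \<le> norm (f \<zeta>)"
    and z: "z \<in> ball 0 1"
  shows "f z = f \<zeta>"
proof -
  define T where "T = {t. \<zeta> + t *s (z - \<zeta>) \<in> ball (0::complex^'n) 1}"
  have dist_shift: "dist (-\<zeta>) w = dist 0 (\<zeta> + w)" for w
    by (simp add: dist_norm norm_minus_commute[of "-\<zeta>"] add.commute)
  have T_vimage: "T = (\<lambda>t. t *s (z - \<zeta>)) -` ball (-\<zeta>) 1"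
    unfolding T_def vimage_def mem_ball by (simp only: dist_shift)
  have "open T"
    unfolding T_vimage
    by (rule open_vimage[OF open_ball linear_continuous_on[OF bounded_linear_vector_smult_left]])
  moreover have "convex T"
    unfolding T_vimage
    by (intro convex_linear_vimage bounded_linear.linear[OF bounded_linear_vector_smult_left]) auto
  moreover have "0 \<in> T" "1 \<in> T" using \<zeta> z by (auto simp: T_def)
  moreover have "(\<lambda>t. f (\<zeta> + t *s (z - \<zeta>))) holomorphic_on T"
    unfolding T_def by (rule holomorphic_on_complex_line[OF holo])
  ultimately have "(\<lambda>t. f (\<zeta> + t *s (z - \<zeta>))) constant_on T"
    using max by (intro maximum_modulus_principle[where U = T and \<xi> = 0]) (auto simp: T_def convex_connected)
  then have "f (\<zeta> + 1 *s (z - \<zeta>)) = f (\<zeta> + 0 *s (z - \<zeta>))"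
    using \<open>0 \<in> T\<close> \<open>1 \<in> T\<close> unfolding constant_on_def by metis
  then show ?thesis by simp
qed

lemma dual_unit_ball_add:
  "x \<in> dual_unit_ball \<Longrightarrow> f \<in> ball_algebra \<Longrightarrow> g \<in> ball_algebra \<Longrightarrow> x (\<lambda>z. f z + g z) = x f + x g"
  unfolding dual_unit_ball_def by blast

lemma dual_unit_ball_cmult:
  "x \<in> dual_unit_ball \<Longrightarrow> f \<in> ball_algebra \<Longrightarrow> x (\<lambda>z. c * f z) = c * x f"
  unfolding dual_unit_ball_def by blast

lemma dual_unit_ball_norm_le:
  "x \<in> dual_unit_ball \<Longrightarrow> f \<in> ball_algebra \<Longrightarrow> norm (x f) \<le> sup_norm f"
  unfolding dual_unit_ball_def by blast

lemma dual_unit_ball_outside: "x \<in> dual_unit_ball \<Longrightarrow> f \<notin> ball_algebra \<Longrightarrow> x f = 0"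
  unfolding dual_unit_ball_def by blast

lemma dual_unit_ball_scale:
  assumes "x \<in> dual_unit_ball" "norm k \<le> 1"
  shows "(\<lambda>f. k * x f) \<in> dual_unit_ball"
proof -
  have "norm (k * x f) \<le> sup_norm f" if "f \<in> ball_algebra" for f
    using assms dual_unit_ball_norm_le[OF assms(1) that]
    by (simp add: norm_mult order_trans[OF mult_right_mono[of "norm k" 1]])
  then show ?thesis
    using assms(1) unfolding dual_unit_ball_def by (auto simp: algebra_simps)
qed

lemma scaled_eval_in_dual_unit_ball:
  assumes "norm l \<le> 1" "\<zeta> \<in> cball 0 1"
  shows "scaled_eval l \<zeta> \<in> dual_unit_ball"
proof -
  have "norm (l * f \<zeta>) \<le> sup_norm f" if "f \<in> ball_algebra" for f
    using assms sup_norm_ge[OF that assms(2)]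
    by (simp add: norm_mult order_trans[OF mult_right_mono[of "norm l" 1]])
  then show ?thesis
    unfolding dual_unit_ball_def scaled_eval_def by (auto simp: ball_algebra_add ball_algebra_cmult algebra_simps)
qed

lemma scaled_eval_inject:
  assumes "scaled_eval l \<zeta> = scaled_eval l' \<zeta>'" "l \<noteq> 0"
  shows "l = l' \<and> \<zeta> = \<zeta>'"
proof -
  have "scaled_eval l \<zeta> (\<lambda>z. 1) = scaled_eval l' \<zeta>' (\<lambda>z. 1)"
    using assms(1) by simp
  then have "l = l'"
    by (simp add: scaled_eval_def ball_algebra_const)
  moreover have "\<zeta> $ i = \<zeta>' $ i" for i
  proof -
    have "scaled_eval l \<zeta> (\<lambda>z. z $ i) = scaled_eval l' \<zeta>' (\<lambda>z. z $ i)"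
      using assms(1) by simp
    then show ?thesis
      using \<open>l = l'\<close> assms(2) by (simp add: scaled_eval_def ball_algebra_coord)
  qed
  ultimately show ?thesis by (simp add: vec_eq_iff)
qed

lemma exposed_point_eq_maximizing_scaled_eval:
  assumes x0: "x0 \<in> dual_unit_ball" and e: "e \<in> ball_algebra"
    and exposes: "\<forall>x\<in>dual_unit_ball - {x0}. Re (x e) < Re (x0 e)"
    and bound: "\<forall>z\<in>cball 0 1. norm (e z) \<le> m"
    and \<zeta>: "\<zeta> \<in> cball 0 1" and l: "norm l = 1" and attains: "l * e \<zeta> = of_real m"
  shows "x0 = scaled_eval l \<zeta>"
proof (rule ccontr)
  assume "x0 \<noteq> scaled_eval l \<zeta>"
  moreover have "scaled_eval l \<zeta> \<in> dual_unit_ball"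
    using l \<zeta> by (simp add: scaled_eval_in_dual_unit_ball)
  ultimately have "Re (scaled_eval l \<zeta> e) < Re (x0 e)"
    using exposes by blast
  then have "m < Re (x0 e)"
    using e attains by (simp add: scaled_eval_def)
  moreover have "sup_norm e \<le> m"
    using bound by (intro sup_norm_le) auto
  then have "Re (x0 e) \<le> m"
    using complex_Re_le_cmod[of "x0 e"] dual_unit_ball_norm_le[OF x0 e] by linarith
  ultimately show False by simp
qed

lemma complex_unimodular_rotation: "\<exists>l. norm l = 1 \<and> l * w = of_real (norm (w::complex))"
proof (cases "w = 0")
  case False
  have "cnj w * w = of_real (norm w) * of_real (norm w)"
    using complex_norm_square[of w] by (simp add: power2_eq_square mult.commute)
  then have "cnj w / of_real (norm w) * w = of_real (norm w)"
    using False by simp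
  with False show ?thesis
    by (intro exI[of _ "cnj w / of_real (norm w)"]) (simp add: norm_divide)
qed (intro exI[of _ 1], simp)

lemma weak_star_exposed_imp_scaled_eval:
  fixes x0 :: "(complex^'n::finite \<Rightarrow> complex) \<Rightarrow> complex"
  assumes "weak_star_exposed dual_unit_ball x0"
  shows "\<exists>l \<zeta>. x0 = scaled_eval l \<zeta> \<and> \<zeta> \<in> sphere 0 1 \<and> norm l = 1"
proof -
  obtain e where x0: "x0 \<in> dual_unit_ball" and e: "e \<in> ball_algebra"
    and exposes: "\<forall>x\<in>dual_unit_ball - {x0}. Re (x e) < Re (x0 e)"
    using assms unfolding weak_star_exposed_def by blast
  have "\<exists>\<zeta>\<in>cball 0 1. \<forall>z\<in>cball 0 1. norm (e z) \<le> norm (e \<zeta>)"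
    using e unfolding ball_algebra_def
    by (intro continuous_attains_sup compact_cball continuous_on_norm) auto
  then obtain \<zeta> where \<zeta>: "\<zeta> \<in> cball 0 1" and max: "\<forall>z\<in>cball 0 1. norm (e z) \<le> norm (e \<zeta>)"
    by blast
  obtain l where l: "norm l = 1" "l * e \<zeta> = of_real (norm (e \<zeta>))"
    using complex_unimodular_rotation by blast
  have eval_eq: "x0 = scaled_eval l z" if "z \<in> cball 0 1" "e z = e \<zeta>" for z
    using exposed_point_eq_maximizing_scaled_eval[OF x0 e exposes max that(1) l(1)] l(2) that(2)
    by simp
  have "norm \<zeta> = 1"
  proof (rule ccontr)
    assume "norm \<zeta> \<noteq> 1"
    with \<zeta> have "\<zeta> \<in> ball 0 1" by simp
    then have "e z = e \<zeta>" if "z \<in> ball 0 1" for z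
      using e max that unfolding ball_algebra_def
      by (intro holo_several_maximum_modulus) auto
    moreover obtain w :: "complex^'n" where w: "norm w = 1/2"
      using vector_choose_size[of "1/2"] by auto
    ultimately have "x0 = scaled_eval l 0" "x0 = scaled_eval l w"
      using eval_eq by auto
    moreover have "l \<noteq> 0"
      using l(1) by auto
    ultimately show False
      using scaled_eval_inject[of l 0 l w] w by auto
  qed
  then show ?thesis
    using eval_eq[OF \<zeta> refl] l(1) by auto
qed

definition peak_function :: "complex^('n::finite) \<Rightarrow> complex^'n \<Rightarrow> complex" where
  "peak_function \<zeta> z = (1 + cinner z \<zeta>) / 2"

lemma peak_function_in_ball_algebra: "peak_function \<zeta> \<in> ball_algebra"
proof -
  have "peak_function \<zeta> = (\<lambda>z. 1/2 + cinner z \<zeta> / 2)"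
    by (simp add: fun_eq_iff peak_function_def add_divide_distrib)
  moreover have "bounded_linear (\<lambda>z. cinner z \<zeta> / 2)"
    by (rule bounded_linear_compose[OF bounded_linear_divide bounded_linear_cinner_left])
  ultimately show ?thesis
    by (simp add: ball_algebra_affine cinner_smult_left)
qed

lemma peak_function_self: "norm \<zeta> = 1 \<Longrightarrow> peak_function \<zeta> \<zeta> = 1"
  by (simp add: peak_function_def cinner_self)

lemma norm_peak_function_le:
  assumes "norm \<zeta> = 1" "norm z \<le> 1"
  shows "norm (peak_function \<zeta> z) \<le> 1 - (norm (z - \<zeta>))^2 / 8"
proof -
  define w where "w = cinner z \<zeta>"
  define d where "d = norm (z - \<zeta>)"
  have "(norm w)^2 \<le> (norm z)^2"
    using norm_cinner_le[of z \<zeta>] assms(1) by (simp add: w_def power_mono)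
  moreover have "(norm z)^2 \<le> 1"
    using assms(2) by (simp add: power_le_one)
  moreover have "(norm (1 + w))^2 = 1 + 2 * Re w + (norm w)^2"
    unfolding cmod_power2 by (simp add: power2_eq_square algebra_simps)
  moreover have "d^2 = (norm z)^2 - 2 * Re w + 1"
    using norm_diff_square_cinner[of z \<zeta>] assms(1) by (simp add: d_def w_def)
  moreover have "(norm (peak_function \<zeta> z))^2 = (norm (1 + w))^2 / 4"
    by (simp add: peak_function_def w_def norm_divide power_divide)
  ultimately have "(norm (peak_function \<zeta> z))^2 \<le> 1 - d^2 / 4"
    by linarith
  also have "\<dots> \<le> (1 - d^2 / 8)^2"
    using norm_ge_zero[of "z - \<zeta>"] by (simp add: d_def power2_eq_square algebra_simps)
  finally have "(norm (peak_function \<zeta> z))^2 \<le> (1 - d^2 / 8)^2" .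
  moreover have "d \<le> 2"
    using norm_triangle_ineq4[of z \<zeta>] assms unfolding d_def by linarith
  then have "0 \<le> 1 - d^2 / 8"
    using power_mono[of d 2 2] by (simp add: d_def)
  ultimately show ?thesis
    unfolding d_def by (rule power2_le_imp_le)
qed

lemma norm_peak_function_le_1: "norm \<zeta> = 1 \<Longrightarrow> norm z \<le> 1 \<Longrightarrow> norm (peak_function \<zeta> z) \<le> 1"
  using norm_peak_function_le[of \<zeta> z] zero_le_power2[of "norm (z - \<zeta>)"] by linarith

text \<open>Away from \<open>\<zeta>\<close> the peak function stays below \<open>1 - r\<^sup>2/8\<close>, which absorbs a small
  multiple of \<open>u\<close>; near \<open>\<zeta>\<close> the function \<open>u\<close> itself is small.\<close>

lemma norm_peak_function_perturb_le:
  fixes \<zeta> :: "complex^'n::finite"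
  assumes \<zeta>: "norm \<zeta> = 1" and u: "u \<in> ball_algebra" "u \<zeta> = 0" and "\<epsilon> > 0"
  obtains s where "s > 0" "\<And>z. z \<in> cball 0 1 \<Longrightarrow> norm (peak_function \<zeta> z + of_real s * u z) \<le> 1 + s * \<epsilon>"
proof -
  define M where "M = sup_norm u"
  have uM: "norm (u z) \<le> M" if "z \<in> cball 0 1" for z
    unfolding M_def using sup_norm_ge[OF u(1) that] .
  have "0 \<le> M"
    using uM[of 0] by (meson centre_in_cball norm_ge_zero order_trans zero_le_one)
  have "continuous_on (cball 0 1) u" "\<zeta> \<in> cball 0 1"
    using u(1) \<zeta> unfolding ball_algebra_def by auto
  then obtain r where "r > 0" and "\<forall>z\<in>cball 0 1. dist z \<zeta> < r \<longrightarrow> dist (u z) (u \<zeta>) < \<epsilon>"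
    using \<open>\<epsilon> > 0\<close> unfolding continuous_on_iff by blast
  then have near: "norm (u z) < \<epsilon>" if "z \<in> cball 0 1" "dist z \<zeta> < r" for z
    using that u(2) by auto
  define s where "s = r^2 / (8 * M + 1)"
  show thesis
  proof
    show "s > 0"
      using \<open>r > 0\<close> \<open>0 \<le> M\<close> by (simp add: s_def)
    fix z :: "complex^'n" assume z: "z \<in> cball 0 1"
    have "norm (peak_function \<zeta> z + of_real s * u z) \<le> norm (peak_function \<zeta> z) + s * norm (u z)"
      using norm_triangle_ineq[of "peak_function \<zeta> z" "of_real s * u z"] \<open>s > 0\<close> by (simp add: norm_mult)
    also have "\<dots> \<le> 1 + s * \<epsilon>"
    proof (cases "dist z \<zeta> < r")
      case True
      have "norm (peak_function \<zeta> z) \<le> 1"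
        using norm_peak_function_le_1[OF \<zeta>] z by simp
      moreover have "s * norm (u z) \<le> s * \<epsilon>"
        using near[OF z True] \<open>s > 0\<close> by simp
      ultimately show ?thesis by linarith
    next
      case False
      have "s * norm (u z) \<le> s * M"
        using uM[OF z] \<open>s > 0\<close> by simp
      moreover have "8 * M + 1 \<noteq> 0"
        using \<open>0 \<le> M\<close> by linarith
      then have "s * (8 * M + 1) = r^2"
        unfolding s_def by simp
      then have "8 * (s * M) + s = r^2"
        by (simp add: algebra_simps)
      moreover have "r^2 \<le> (norm (z - \<zeta>))^2"
        using False \<open>r > 0\<close> by (simp add: dist_norm power_mono)
      moreover have "norm (peak_function \<zeta> z) \<le> 1 - (norm (z - \<zeta>))^2 / 8"
        using norm_peak_function_le[OF \<zeta>] z by simp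
      ultimately show ?thesis
        using \<open>s > 0\<close> mult_pos_pos[OF \<open>s > 0\<close> \<open>\<epsilon> > 0\<close>] by linarith
    qed
    finally show "norm (peak_function \<zeta> z + of_real s * u z) \<le> 1 + s * \<epsilon>" .
  qed
qed

lemma dual_unit_ball_peak_Re_nonpos:
  fixes \<zeta> :: "complex^'n::finite"
  assumes x: "x \<in> dual_unit_ball" and peak: "x (peak_function \<zeta>) = 1" and \<zeta>: "norm \<zeta> = 1"
    and u: "u \<in> ball_algebra" "u \<zeta> = 0"
  shows "Re (x u) \<le> 0"
proof (rule ccontr)
  assume "\<not> Re (x u) \<le> 0"
  then obtain s where "s > 0"
    and perturb: "\<And>z. z \<in> cball 0 1 \<Longrightarrow> norm (peak_function \<zeta> z + of_real s * u z) \<le> 1 + s * (Re (x u) / 2)"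
    using norm_peak_function_perturb_le[OF \<zeta> u, of "Re (x u) / 2"] by auto
  have perturbed: "(\<lambda>z. peak_function \<zeta> z + of_real s * u z) \<in> ball_algebra"
    by (intro ball_algebra_add ball_algebra_cmult peak_function_in_ball_algebra u(1))
  have "sup_norm (\<lambda>z. peak_function \<zeta> z + of_real s * u z) \<le> 1 + s * (Re (x u) / 2)"
    by (rule sup_norm_le) (rule perturb)
  then have "norm (x (\<lambda>z. peak_function \<zeta> z + of_real s * u z)) \<le> 1 + s * (Re (x u) / 2)"
    using dual_unit_ball_norm_le[OF x perturbed] by linarith
  moreover have "x (\<lambda>z. peak_function \<zeta> z + of_real s * u z) = 1 + of_real s * x u"
    using dual_unit_ball_add[OF x peak_function_in_ball_algebra ball_algebra_cmult[OF u(1)]]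
      dual_unit_ball_cmult[OF x u(1)] peak by simp
  ultimately have "1 + s * Re (x u) \<le> 1 + s * Re (x u) / 2"
    using complex_Re_le_cmod[of "1 + of_real s * x u"] by simp
  moreover have "0 < s * Re (x u)"
    using \<open>s > 0\<close> \<open>\<not> Re (x u) \<le> 0\<close> by simp
  ultimately show False by linarith
qed

lemma dual_unit_ball_peak_eq_scaled_eval:
  fixes \<zeta> :: "complex^'n::finite"
  assumes x: "x \<in> dual_unit_ball" and peak: "x (peak_function \<zeta>) = 1" and \<zeta>: "norm \<zeta> = 1"
  shows "x = scaled_eval 1 \<zeta>"
proof
  fix f
  show "x f = scaled_eval 1 \<zeta> f"
  proof (cases "f \<in> ball_algebra")
    case False
    then show ?thesis
      using dual_unit_ball_outside[OF x] by (simp add: scaled_eval_def)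
  next
    case True
    define v where "v = (\<lambda>z. f z + (- f \<zeta>) * peak_function \<zeta> z)"
    have v: "v \<in> ball_algebra" "v \<zeta> = 0"
      unfolding v_def
      by (intro ball_algebra_add True ball_algebra_cmult peak_function_in_ball_algebra)
        (simp add: peak_function_self[OF \<zeta>])
    have "x v = x f + (- f \<zeta>) * x (peak_function \<zeta>)"
      using dual_unit_ball_add[OF x True ball_algebra_cmult[OF peak_function_in_ball_algebra]]
        dual_unit_ball_cmult[OF x peak_function_in_ball_algebra]
      unfolding v_def by (simp only:)
    then have "x v = x f - f \<zeta>"
      using peak by simp
    moreover have "Re (c * x v) \<le> 0" for c
      using dual_unit_ball_peak_Re_nonpos[OF x peak \<zeta> ball_algebra_cmult[OF v(1)]] v(2)
        dual_unit_ball_cmult[OF x v(1)] by simp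
    from this[of 1] this[of "-1"] this[of \<i>] this[of "-\<i>"] have "x v = 0"
      by (simp add: complex_eq_iff)
    ultimately show ?thesis
      using True by (simp add: scaled_eval_def)
  qed
qed

lemma complex_eq_1_if_norm_le_1_Re_ge_1:
  assumes "norm (w::complex) \<le> 1" "1 \<le> Re w"
  shows "w = 1"
proof -
  have "(Re w)^2 + (Im w)^2 \<le> 1"
    using assms(1) by (simp add: cmod_power2[symmetric] power_le_one)
  moreover have "1 \<le> (Re w)^2"
    using assms(2) by (simp add: one_le_power)
  ultimately have "(Im w)^2 \<le> 0"
    by linarith
  moreover have "Re w \<le> 1"
    using complex_Re_le_cmod[of w] assms(1) by linarith
  ultimately show ?thesis
    using assms(2) by (simp add: complex_eq_iff)
qed

lemma dual_unit_ball_rotated_peak_eq_scaled_eval: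
  fixes \<zeta> :: "complex^'n::finite"
  assumes x: "x \<in> dual_unit_ball" and \<zeta>: "norm \<zeta> = 1" and l: "norm l = 1"
    and Re_ge: "1 \<le> Re (x (\<lambda>z. cnj l * peak_function \<zeta> z))"
  shows "x = scaled_eval l \<zeta>"
proof -
  have l_cnj: "l * cnj l = 1"
    using complex_norm_square[of l] l by simp
  have "sup_norm (\<lambda>z. cnj l * peak_function \<zeta> z) \<le> 1"
    using norm_peak_function_le_1 \<zeta> l by (intro sup_norm_le) (simp add: norm_mult)
  moreover have rotated_peak: "(\<lambda>z. cnj l * peak_function \<zeta> z) \<in> ball_algebra"
    by (intro ball_algebra_cmult peak_function_in_ball_algebra)
  ultimately have "norm (x (\<lambda>z. cnj l * peak_function \<zeta> z)) \<le> 1"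
    using dual_unit_ball_norm_le[OF x rotated_peak] by linarith
  with Re_ge have "x (\<lambda>z. cnj l * peak_function \<zeta> z) = 1"
    by (rule complex_eq_1_if_norm_le_1_Re_ge_1[rotated])
  then have "cnj l * x (peak_function \<zeta>) = 1"
    using dual_unit_ball_cmult[OF x peak_function_in_ball_algebra] by simp
  moreover have "(\<lambda>f. cnj l * x f) \<in> dual_unit_ball"
    using l by (intro dual_unit_ball_scale[OF x]) simp
  ultimately have y: "(\<lambda>f. cnj l * x f) = scaled_eval 1 \<zeta>"
    using dual_unit_ball_peak_eq_scaled_eval \<zeta> by blast
  show ?thesis
  proof
    fix f
    have "x f = l * (cnj l * x f)"
      using l_cnj by (simp add: mult.assoc[symmetric])
    then show "x f = scaled_eval l \<zeta> f"
      using fun_cong[OF y, of f] by (simp add: scaled_eval_def)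
  qed
qed

lemma scaled_eval_weak_star_exposed:
  assumes \<zeta>: "\<zeta> \<in> sphere 0 1" and l: "norm l = 1"
  shows "weak_star_exposed dual_unit_ball (scaled_eval l \<zeta>)"
  unfolding weak_star_exposed_def
proof (intro conjI bexI[of _ "\<lambda>z. cnj l * peak_function \<zeta> z"] ballI)
  show "scaled_eval l \<zeta> \<in> dual_unit_ball"
    using l \<zeta> by (simp add: scaled_eval_in_dual_unit_ball)
  show "(\<lambda>z. cnj l * peak_function \<zeta> z) \<in> ball_algebra"
    by (intro ball_algebra_cmult peak_function_in_ball_algebra)
  have "l * cnj l = 1"
    using complex_norm_square[of l] l by simp
  then have "scaled_eval l \<zeta> (\<lambda>z. cnj l * peak_function \<zeta> z) = 1"
    using \<zeta> by (simp add: scaled_eval_def ball_algebra_cmult peak_function_in_ball_algebra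
        peak_function_self mult.assoc[symmetric])
  moreover fix x assume "x \<in> dual_unit_ball - {scaled_eval l \<zeta>}"
  then have "\<not> 1 \<le> Re (x (\<lambda>z. cnj l * peak_function \<zeta> z))"
    using dual_unit_ball_rotated_peak_eq_scaled_eval[of x \<zeta> l] \<zeta> l by auto
  ultimately show "Re (x (\<lambda>z. cnj l * peak_function \<zeta> z)) < Re (scaled_eval l \<zeta> (\<lambda>z. cnj l * peak_function \<zeta> z))"
    by simp
qed

theorem theorem3p2:
  shows "{x0 :: (complex^('n::finite) \<Rightarrow> complex) \<Rightarrow> complex. weak_star_exposed dual_unit_ball x0}
         = {scaled_eval l \<zeta> | l \<zeta>. \<zeta> \<in> sphere (0 :: complex^'n) 1 \<and> norm l = 1}"
  using weak_star_exposed_imp_scaled_eval scaled_eval_weak_star_exposed by blast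

end
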